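(* Let $\langle S\mid R\rangle\cong\mathbb{Z}^n$ be a 3-presentation such that $|S|$ is minimal among all 3-presentations of $\mathbb{Z}^n$, and fix an isomorphism $\phi:\langle S\mid R\rangle\to\mathbb{Z}^n$. Then for each $r\in R$ whose normal form is not the empty word, the normal form of $r$ is $g^ah^bi^c$ with $g,h,i\in S$ distinct and $a,b,c\neq0$, and $\dim r=2$.
   Context: A 3-presentation of a group $G$ is a group presentation $\langle S\mid R\rangle\cong G$ (with $S,R$ finite) in which each relation is the empty word, $g^a$, $g^ah^b$, or $g^ah^bi^c$ with $g,h,i\in S$ and $a,b,c\in\mathbb{Z}$. Such a word is in normal form if its generators are distinct and its exponents nonzero; every relation $r$ is conjugate in the free group on $S$ to a normal-form word $w$, unique up to cyclic permutation, and we write $r\leadsto w$. Given the isomorphism $\phi$, for $S'\subseteq S$ let $\dim S'=\dim\operatorname{span}_{\mathbb{R}}\{\phi(g):g\in S'\}$, viewing $\phi(g)\in\mathbb{Z}^n\subseteq\mathbb{R}^n$; for $r\in R$ with $r\leadsto\prod_i g_i^{a_i}$, $\dim r=\dim\{g_i\}$. *)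

theory Defs
  imports "HOL-Analysis.Analysis"
begin

text \<open>Letters of the free group on generators of type 'g: (g, False) is g, (g, True) is g^-1.
  A syllable (g, a) stands for g^a; a syllable word is a list of syllables.\<close>

type_synonym 'g letter = "'g \<times> bool"
type_synonym 'g sylword = "('g \<times> int) list"

definition inv_letter :: "'g letter \<Rightarrow> 'g letter" where
  "inv_letter x = (fst x, \<not> snd x)"

definition inv_word :: "'g letter list \<Rightarrow> 'g letter list" where
  "inv_word u = rev (map inv_letter u)"

definition expand_syl :: "'g \<times> int \<Rightarrow> 'g letter list" where
  "expand_syl s = replicate (nat \<bar>snd s\<bar>) (fst s, snd s < 0)"

definition expand :: "'g sylword \<Rightarrow> 'g letter list" where
  "expand w = concat (map expand_syl w)"

definition free_step :: "'g letter list \<Rightarrow> 'g letter list \<Rightarrow> bool" where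
  "free_step u v \<longleftrightarrow> (\<exists>xs ys x. u = xs @ [x, inv_letter x] @ ys \<and> v = xs @ ys)"

definition free_eq :: "'g letter list \<Rightarrow> 'g letter list \<Rightarrow> bool" where
  "free_eq = equivclp free_step"

definition free_conj :: "'g letter list \<Rightarrow> 'g letter list \<Rightarrow> bool" where
  "free_conj u v \<longleftrightarrow> (\<exists>c. free_eq (c @ u @ inv_word c) v)"

definition normal_form :: "'g sylword \<Rightarrow> bool" where
  "normal_form w \<longleftrightarrow> distinct (map fst w) \<and> (\<forall>s\<in>set w. snd s \<noteq> 0)"

definition nf_of :: "'g sylword \<Rightarrow> 'g sylword \<Rightarrow> bool" where
  "nf_of r w \<longleftrightarrow> normal_form w \<and> free_conj (expand r) (expand w)"

definition pres_step :: "'g set \<Rightarrow> 'g sylword set \<Rightarrow> 'g letter list \<Rightarrow> 'g letter list \<Rightarrow> bool" where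
  "pres_step S R u v \<longleftrightarrow>
     (\<exists>xs ys x. fst x \<in> S \<and> u = xs @ [x, inv_letter x] @ ys \<and> v = xs @ ys) \<or>
     (\<exists>xs ys r. r \<in> R \<and> u = xs @ expand r @ ys \<and> v = xs @ ys)"

definition pres_eq :: "'g set \<Rightarrow> 'g sylword set \<Rightarrow> 'g letter list \<Rightarrow> 'g letter list \<Rightarrow> bool" where
  "pres_eq S R = equivclp (pres_step S R)"

definition ev :: "('g \<Rightarrow> int^'n) \<Rightarrow> 'g letter list \<Rightarrow> int^'n" where
  "ev phi u = sum_list (map (\<lambda>x. if snd x then - phi (fst x) else phi (fst x)) u)"

text \<open>phi (on generators) induces an isomorphism \<langle>S | R\<rangle> \<rightarrow> Z^n: the induced map is well defined,
  injective and surjective.\<close>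
definition presents_iso :: "'g set \<Rightarrow> 'g sylword set \<Rightarrow> ('g \<Rightarrow> int^'n) \<Rightarrow> bool" where
  "presents_iso S R phi \<longleftrightarrow>
     (\<forall>u. set (map fst u) \<subseteq> S \<longrightarrow> (ev phi u = 0 \<longleftrightarrow> pres_eq S R u [])) \<and>
     (\<forall>v. \<exists>u. set (map fst u) \<subseteq> S \<and> ev phi u = v)"

definition three_presentation :: "'g set \<Rightarrow> 'g sylword set \<Rightarrow> bool" where
  "three_presentation S R \<longleftrightarrow> finite S \<and> finite R \<and>
     (\<forall>r\<in>R. length r \<le> 3 \<and> set (map fst r) \<subseteq> S)"

definition real_vec :: "int^'n \<Rightarrow> real^'n" where
  "real_vec v = (\<chi> i. real_of_int (v $ i))"

definition gen_dim :: "('g \<Rightarrow> int^'n) \<Rightarrow> 'g set \<Rightarrow> nat" where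
  "gen_dim phi T = dim ((\<lambda>g. real_vec (phi g)) ` T)"

end

theory Submission
  imports Defs
begin

text \<open>If the images of two generators of a minimal presentation spanned a line in R^n, they would
  be integer multiples m_z v of a single vector v which, by Bezout, lies in the subgroup they generate.
  A Tietze transformation then replaces all of them by one new generator mapped to v (each old
  generator z becoming its power of exponent m_z), giving a 3-presentation of Z^n with fewer
  generators. Hence any two generators have linearly independent images, and no generator maps
  to 0. On the other hand, the generators of the normal form w of a relation occur in the relation,
  so there are at most three of them, and phi(r) = \<Sum> a_i phi(g_i) = 0 with all a_i nonzero shows
  that their images span a space of dimension less than the length of w. Together this forces
  length 3 and dimension 2.\<close>

section \<open>Words and substitutions\<close>

lemma inv_letter_inv_letter [simp]: "inv_letter (inv_letter x) = x"
  by (simp add: inv_letter_def)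

lemma fst_inv_letter [simp]: "fst (inv_letter x) = fst x"
  by (simp add: inv_letter_def)

lemma snd_inv_letter [simp]: "snd (inv_letter x) = (\<not> snd x)"
  by (simp add: inv_letter_def)

lemma inv_word_Nil [simp]: "inv_word [] = []"
  by (simp add: inv_word_def)

lemma inv_word_Cons [simp]: "inv_word (x # u) = inv_word u @ [inv_letter x]"
  by (simp add: inv_word_def)

lemma inv_word_append [simp]: "inv_word (u @ v) = inv_word v @ inv_word u"
  by (simp add: inv_word_def)

lemma inv_word_inv_word [simp]: "inv_word (inv_word u) = u"
  by (simp add: inv_word_def rev_map comp_def)

lemma map_fst_inv_word [simp]: "map fst (inv_word u) = rev (map fst u)"
  by (simp add: inv_word_def rev_map comp_def)

lemma inv_word_replicate [simp]: "inv_word (replicate n x) = replicate n (inv_letter x)"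
  by (simp add: inv_word_def)

lemma expand_Nil [simp]: "expand [] = []"
  by (simp add: expand_def)

lemma expand_Cons [simp]: "expand (s # w) = expand_syl s @ expand w"
  by (simp add: expand_def)

lemma expand_append [simp]: "expand (u @ v) = expand u @ expand v"
  by (simp add: expand_def)

lemma set_map_fst_expand_syl: "set (map fst (expand_syl (g, a))) \<subseteq> {g}"
  by (auto simp: expand_syl_def)

lemma set_map_fst_expand: "set (map fst (expand w)) \<subseteq> set (map fst w)"
  by (auto simp: expand_def expand_syl_def) force

definition subst_word :: "('g \<Rightarrow> 'h letter list) \<Rightarrow> 'g letter list \<Rightarrow> 'h letter list" where
  "subst_word F u = concat (map (\<lambda>x. if snd x then inv_word (F (fst x)) else F (fst x)) u)"

lemma subst_word_Nil [simp]: "subst_word F [] = []"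
  by (simp add: subst_word_def)

lemma subst_word_Cons [simp]:
  "subst_word F (x # u) = (if snd x then inv_word (F (fst x)) else F (fst x)) @ subst_word F u"
  by (simp add: subst_word_def)

lemma subst_word_append [simp]: "subst_word F (u @ v) = subst_word F u @ subst_word F v"
  by (simp add: subst_word_def)

lemma subst_word_inv_word: "subst_word F (inv_word u) = inv_word (subst_word F u)"
  by (induction u) auto

lemma subst_word_subst_word: "subst_word F (subst_word G u) = subst_word (\<lambda>h. subst_word F (G h)) u"
  by (induction u) (auto simp: subst_word_inv_word)

lemma set_map_fst_subst_word:
  "set (map fst (subst_word F u)) \<subseteq> (\<Union>x\<in>set u. set (map fst (F (fst x))))"
  by (induction u) (auto simp del: set_map simp: set_map[symmetric])

lemma set_map_fst_subst_word_subset: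
  assumes "set (map fst u) \<subseteq> S" and "\<And>g. g \<in> S \<Longrightarrow> set (map fst (F g)) \<subseteq> S'"
  shows "set (map fst (subst_word F u)) \<subseteq> S'"
  using set_map_fst_subst_word[of F u] assms by fastforce

lemma concat_replicate_replicate: "concat (replicate n (replicate m x)) = replicate (n * m) x"
  by (induction n) (auto simp: replicate_add)

lemma subst_word_replicate:
  "subst_word F (replicate n x) = concat (replicate n (if snd x then inv_word (F (fst x)) else F (fst x)))"
  by (induction n) auto

lemma subst_word_expand_syl:
  "subst_word (\<lambda>z. expand_syl (f z, k z)) (expand_syl (z, a)) = expand_syl (f z, k z * a)"
proof -
  have n: "nat \<bar>k z * a\<bar> = nat \<bar>a\<bar> * nat \<bar>k z\<bar>"
    by (simp add: abs_mult nat_mult_distrib)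
  show ?thesis
    by (cases "a < 0") (auto simp: expand_syl_def subst_word_replicate concat_replicate_replicate n
        inv_letter_def mult_less_0_iff intro!: replicate_eq_replicate[THEN iffD2])
qed

definition rename_syls :: "('g \<Rightarrow> 'h) \<Rightarrow> ('g \<Rightarrow> int) \<Rightarrow> 'g sylword \<Rightarrow> 'h sylword" where
  "rename_syls f k w = map (\<lambda>(z, a). (f z, k z * a)) w"

lemma subst_word_expand:
  "subst_word (\<lambda>z. expand_syl (f z, k z)) (expand w) = expand (rename_syls f k w)"
  by (induction w) (auto simp: rename_syls_def subst_word_expand_syl)

lemma ev_Nil [simp]: "ev phi [] = 0"
  by (simp add: ev_def)

lemma ev_Cons [simp]: "ev phi (x # u) = (if snd x then - phi (fst x) else phi (fst x)) + ev phi u"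
  by (simp add: ev_def)

lemma ev_append [simp]: "ev phi (u @ v) = ev phi u + ev phi v"
  by (simp add: ev_def)

lemma ev_inv_word [simp]: "ev phi (inv_word u) = - ev phi u"
  by (induction u) (auto simp: inv_letter_def)

lemma ev_zero [simp]: "ev (\<lambda>_. 0) u = 0"
  by (induction u) auto

lemma ev_subst_word: "ev phi (subst_word F u) = ev (\<lambda>z. ev phi (F z)) u"
  by (induction u) auto

lemma ev_cong: "(\<And>x. x \<in> set u \<Longrightarrow> phi (fst x) = psi (fst x)) \<Longrightarrow> ev phi u = ev psi u"
  by (induction u) auto

lemma ev_expand_syl: "ev phi (expand_syl (g, a)) = a *s phi g"
proof -
  have "ev phi (replicate n x) = of_nat n *s (if snd x then - phi (fst x) else phi (fst x))" for n x
    by (induction n) (auto simp: vector_sadd_rdistrib add.commute)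
  then show ?thesis
    by (auto simp: expand_syl_def vector_smult_lneg[symmetric])
qed

lemma ev_expand: "ev phi (expand w) = (\<Sum>s\<leftarrow>w. snd s *s phi (fst s))"
  by (induction w) (auto simp: ev_expand_syl)

lemma ev_expand_rename_syls:
  assumes "set (map fst w) \<subseteq> S" and "\<And>g. g \<in> S \<Longrightarrow> k g *s psi (f g) = phi g"
  shows "ev psi (expand (rename_syls f k w)) = ev phi (expand w)"
  using assms
  by (induction w) (auto simp: rename_syls_def ev_expand_syl mult.commute simp flip: vector_smult_assoc)

section \<open>Equality in a presented group\<close>

lemma equivclp_invariant:
  assumes "equivclp P a b" and "\<And>x y. P x y \<Longrightarrow> f x = f y"
  shows "f a = f b"
  using assms(1) by (induction rule: equivclp_induct) (auto dest: assms(2))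

lemma equivclp_map:
  assumes "equivclp P a b" and "\<And>x y. P x y \<Longrightarrow> equivclp Q (f x) (f y)"
  shows "equivclp Q (f a) (f b)"
  using assms(1)
  by (induction rule: equivclp_induct) (auto dest: assms(2) intro: equivclp_trans equivclp_sym)

lemma pres_eq_refl [simp]: "pres_eq S R u u"
  by (simp add: pres_eq_def)

lemma pres_eq_sym: "pres_eq S R u v \<Longrightarrow> pres_eq S R v u"
  by (simp add: pres_eq_def equivclp_sym)

lemma pres_eq_trans [trans]: "pres_eq S R u v \<Longrightarrow> pres_eq S R v w \<Longrightarrow> pres_eq S R u w"
  unfolding pres_eq_def by (rule equivclp_trans)

lemma pres_step_cases:
  assumes "pres_step S R u v"
  obtains (cancel) xs ys x where "fst x \<in> S" "u = xs @ [x, inv_letter x] @ ys" "v = xs @ ys"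
    | (relator) xs ys r where "r \<in> R" "u = xs @ expand r @ ys" "v = xs @ ys"
  using assms unfolding pres_step_def by blast

lemma pres_eq_cancel_letter: "fst x \<in> S \<Longrightarrow> pres_eq S R (xs @ [x, inv_letter x] @ ys) (xs @ ys)"
  unfolding pres_eq_def pres_step_def by (rule r_into_equivclp) blast

lemma pres_eq_relator: "r \<in> R \<Longrightarrow> pres_eq S R (xs @ expand r @ ys) (xs @ ys)"
  unfolding pres_eq_def pres_step_def by (rule r_into_equivclp) blast

lemma pres_eq_append_context:
  assumes "pres_eq S R u v"
  shows "pres_eq S R (xs @ u @ ys) (xs @ v @ ys)"
  using assms unfolding pres_eq_def
proof (rule equivclp_map)
  fix u v assume "pres_step S R u v"
  then show "equivclp (pres_step S R) (xs @ u @ ys) (xs @ v @ ys)"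
  proof (cases rule: pres_step_cases)
    case (cancel as bs x)
    then show ?thesis
      using pres_eq_cancel_letter[of x S R "xs @ as" "bs @ ys"] by (simp add: pres_eq_def)
  next
    case (relator as bs r)
    then show ?thesis
      using pres_eq_relator[of r R S "xs @ as" "bs @ ys"] by (simp add: pres_eq_def)
  qed
qed

lemma pres_eq_append: "pres_eq S R u v \<Longrightarrow> pres_eq S R u' v' \<Longrightarrow> pres_eq S R (u @ u') (v @ v')"
  using pres_eq_append_context[of S R u v "[]" u'] pres_eq_append_context[of S R u' v' v "[]"]
  by (auto intro: pres_eq_trans)

lemma pres_eq_cancel:
  "set (map fst y) \<subseteq> S \<Longrightarrow> pres_eq S R (xs @ y @ inv_word y @ ys) (xs @ ys)"
proof (induction y arbitrary: xs ys)
  case Nil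
  then show ?case by simp
next
  case (Cons x y)
  have "pres_eq S R ((xs @ [x]) @ y @ inv_word y @ ([inv_letter x] @ ys)) ((xs @ [x]) @ [inv_letter x] @ ys)"
    using Cons.IH[of "xs @ [x]" "[inv_letter x] @ ys"] Cons.prems by simp
  moreover have "pres_eq S R (xs @ [x, inv_letter x] @ ys) (xs @ ys)"
    using Cons.prems by (intro pres_eq_cancel_letter) simp
  ultimately show ?case by (auto intro: pres_eq_trans)
qed

lemma pres_eq_inv_word:
  assumes "pres_eq S R u v" "set (map fst u) \<subseteq> S" "set (map fst v) \<subseteq> S"
  shows "pres_eq S R (inv_word u) (inv_word v)"
proof -
  have "pres_eq S R (inv_word u) (inv_word u @ v @ inv_word v)"
    using pres_eq_cancel[OF assms(3), of R "inv_word u" "[]"] by (simp add: pres_eq_sym)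
  also have "pres_eq S R \<dots> (inv_word u @ u @ inv_word v)"
    using pres_eq_append_context[OF pres_eq_sym[OF assms(1)]] by blast
  also have "pres_eq S R \<dots> (inv_word v)"
    using pres_eq_cancel[of "inv_word u" S R "[]" "inv_word v"] assms(2) by simp
  finally show ?thesis .
qed

lemma pres_eq_subst_word:
  assumes "pres_eq S R u v"
    and gens: "\<And>g. g \<in> S \<Longrightarrow> set (map fst (F g)) \<subseteq> S'"
    and rels: "\<And>r. r \<in> R \<Longrightarrow> pres_eq S' R' (subst_word F (expand r)) []"
  shows "pres_eq S' R' (subst_word F u) (subst_word F v)"
  using assms(1) unfolding pres_eq_def
proof (rule equivclp_map)
  fix u v assume "pres_step S R u v"
  then show "equivclp (pres_step S' R') (subst_word F u) (subst_word F v)"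
  proof (cases rule: pres_step_cases)
    case (cancel xs ys x)
    have "set (map fst (if snd x then inv_word (F (fst x)) else F (fst x))) \<subseteq> S'"
      using gens[OF cancel(1)] by (cases "snd x") simp_all
    from pres_eq_cancel[OF this, of R' "subst_word F xs" "subst_word F ys"]
    show ?thesis using cancel by (cases "snd x") (simp_all add: pres_eq_def)
  next
    case (relator xs ys r)
    show ?thesis
      using pres_eq_append_context[OF rels[OF relator(1)], of "subst_word F xs" "subst_word F ys"] relator
      by (simp add: pres_eq_def)
  qed
qed

lemma pres_eq_subst_word_self:
  assumes "set (map fst u) \<subseteq> S"
    and "\<And>g. g \<in> S \<Longrightarrow> pres_eq S R (F g) [(g, False)] \<and> set (map fst (F g)) \<subseteq> S"
  shows "pres_eq S R (subst_word F u) u"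
  using assms(1)
proof (induction u)
  case Nil
  then show ?case by simp
next
  case (Cons x u)
  obtain g b where x: "x = (g, b)" by (cases x)
  have g: "g \<in> S" using Cons.prems x by auto
  have "pres_eq S R (if b then inv_word (F g) else F g) [x]"
  proof (cases b)
    case True
    have "pres_eq S R (inv_word (F g)) (inv_word [(g, False)])"
      using assms(2)[OF g] g by (intro pres_eq_inv_word) auto
    then show ?thesis using True x by (simp add: inv_letter_def)
  qed (use assms(2)[OF g] x in simp)
  moreover have "pres_eq S R (subst_word F u) u"
    using Cons by simp
  ultimately have "pres_eq S R ((if b then inv_word (F g) else F g) @ subst_word F u) ([x] @ u)"
    by (rule pres_eq_append)
  then show ?case using x by (cases b) simp_all
qed

lemma ev_pres_eq:
  assumes "pres_eq S R u v" and "\<And>r. r \<in> R \<Longrightarrow> ev phi (expand r) = 0"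
  shows "ev phi u = ev phi v"
  using assms(1) unfolding pres_eq_def
  by (rule equivclp_invariant) (auto elim!: pres_step_cases simp: assms(2) inv_letter_def)

lemma presents_iso_relator_ev:
  assumes "three_presentation S R" and "presents_iso S R phi" and "r \<in> R"
  shows "ev phi (expand r) = 0"
proof -
  have "set (map fst (expand r)) \<subseteq> S"
    using set_map_fst_expand[of r] assms(1,3) by (auto simp: three_presentation_def)
  moreover have "pres_eq S R (expand r) []"
    using pres_eq_relator[OF assms(3), of S "[]" "[]"] by simp
  ultimately show ?thesis using assms(2) unfolding presents_iso_def by blast
qed

definition letter_exp :: "'g letter \<Rightarrow> int" where
  "letter_exp x = (if snd x then -1 else 1)"

lemma expand_syl_step:
  "expand_syl (t, s + letter_exp (t, b)) = (t, b) # expand_syl (t, s) \<or>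
   expand_syl (t, s) = (t, \<not> b) # expand_syl (t, s + letter_exp (t, b))"
proof (cases "s = 0 \<or> (s < 0 \<longleftrightarrow> b)")
  case True
  then have "nat \<bar>s + letter_exp (t, b)\<bar> = Suc (nat \<bar>s\<bar>)" "s + letter_exp (t, b) < 0 \<longleftrightarrow> b"
    by (auto simp: letter_exp_def)
  then show ?thesis using True by (auto simp: expand_syl_def)
next
  case False
  then have "nat \<bar>s\<bar> = Suc (nat \<bar>s + letter_exp (t, b)\<bar>)" "s < 0 \<longleftrightarrow> \<not> b"
    by (auto simp: letter_exp_def split: if_splits)
  then show ?thesis
    using False by (cases "s + letter_exp (t, b) = 0") (auto simp: expand_syl_def letter_exp_def)
qed

definition exp_sum :: "'g letter list \<Rightarrow> int" where
  "exp_sum u = (\<Sum>x\<leftarrow>u. letter_exp x)"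

lemma exp_sum_Nil [simp]: "exp_sum [] = 0"
  by (simp add: exp_sum_def)

lemma exp_sum_Cons [simp]: "exp_sum (x # u) = letter_exp x + exp_sum u"
  by (simp add: exp_sum_def)

lemma exp_sum_append [simp]: "exp_sum (u @ v) = exp_sum u + exp_sum v"
  by (simp add: exp_sum_def)

lemma exp_sum_expand_syl [simp]: "exp_sum (expand_syl (t, a)) = a"
  by (simp add: exp_sum_def expand_syl_def letter_exp_def sum_list_replicate)

lemma exp_sum_expand: "exp_sum (expand w) = (\<Sum>s\<leftarrow>w. snd s)"
  by (induction w) auto

lemma pres_eq_power:
  assumes "t \<in> S" and "set (map fst u) \<subseteq> {t}"
  shows "pres_eq S R u (expand_syl (t, exp_sum u))"
  using assms(2)
proof (induction u)
  case Nil
  then show ?case by (simp add: expand_syl_def)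
next
  case (Cons x u)
  obtain b where x: "x = (t, b)" using Cons.prems by (cases x) auto
  have "pres_eq S R (x # u) (x # expand_syl (t, exp_sum u))"
    using pres_eq_append_context[OF Cons.IH, of "[x]" "[]"] Cons.prems by simp
  also have "pres_eq S R \<dots> (expand_syl (t, exp_sum u + letter_exp x))"
    using expand_syl_step[of t "exp_sum u" b]
  proof
    assume "expand_syl (t, exp_sum u) = (t, \<not> b) # expand_syl (t, exp_sum u + letter_exp (t, b))"
    then show ?thesis
      using pres_eq_cancel_letter[of x S R "[]"] assms(1) x by (simp add: inv_letter_def)
  qed (simp add: x)
  finally show ?case by (simp add: add.commute)
qed

section \<open>Merging generators with parallel images\<close>

text \<open>A Tietze transformation: mutually inverse substitutions F and G between two presentations,
  compatible with the maps to Z^n, carry an isomorphism over.\<close>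

lemma presents_iso_transfer:
  fixes phi :: "'g \<Rightarrow> int^'n" and phi' :: "'h \<Rightarrow> int^'n"
  assumes iso: "presents_iso S R phi"
    and F_gens: "\<And>g. g \<in> S \<Longrightarrow> set (map fst (F g)) \<subseteq> S'"
    and F_ev: "\<And>g. g \<in> S \<Longrightarrow> ev phi' (F g) = phi g"
    and F_rel: "\<And>r. r \<in> R \<Longrightarrow> pres_eq S' R' (subst_word F (expand r)) []"
    and G_gens: "\<And>h. h \<in> S' \<Longrightarrow> set (map fst (G h)) \<subseteq> S"
    and G_ev: "\<And>h. h \<in> S' \<Longrightarrow> ev phi (G h) = phi' h"
    and F_G: "\<And>h. h \<in> S' \<Longrightarrow> pres_eq S' R' (subst_word F (G h)) [(h, False)]"
    and rel': "\<And>r. r \<in> R' \<Longrightarrow> ev phi' (expand r) = 0"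
  shows "presents_iso S' R' phi'"
  unfolding presents_iso_def
proof (intro conjI allI impI)
  fix w :: "int^'n"
  obtain u where u: "set (map fst u) \<subseteq> S" "ev phi u = w"
    using iso unfolding presents_iso_def by blast
  have "set (map fst (subst_word F u)) \<subseteq> S'"
    using u(1) F_gens by (rule set_map_fst_subst_word_subset)
  moreover have "ev phi' (subst_word F u) = w"
    using u F_ev by (auto simp: ev_subst_word intro: ev_cong)
  ultimately show "\<exists>u. set (map fst u) \<subseteq> S' \<and> ev phi' u = w" by blast
next
  fix u :: "'h letter list"
  assume u: "set (map fst u) \<subseteq> S'"
  show "ev phi' u = 0 \<longleftrightarrow> pres_eq S' R' u []"
  proof
    assume ev0: "ev phi' u = 0"
    have "set (map fst (subst_word G u)) \<subseteq> S"
      using u G_gens by (rule set_map_fst_subst_word_subset)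
    moreover have "ev phi (subst_word G u) = 0"
      using u G_ev ev0 by (auto simp: ev_subst_word intro: trans[OF ev_cong])
    ultimately have "pres_eq S R (subst_word G u) []"
      using iso unfolding presents_iso_def by blast
    then have "pres_eq S' R' (subst_word F (subst_word G u)) []"
      using pres_eq_subst_word[OF _ F_gens F_rel] by fastforce
    moreover have "pres_eq S' R' (subst_word F (subst_word G u)) u"
      unfolding subst_word_subst_word
    proof (rule pres_eq_subst_word_self[OF u])
      fix h assume h: "h \<in> S'"
      show "pres_eq S' R' (subst_word F (G h)) [(h, False)] \<and>
          set (map fst (subst_word F (G h))) \<subseteq> S'"
        using F_G[OF h] set_map_fst_subst_word_subset[OF G_gens[OF h], of F S'] F_gens by blast
    qed
    ultimately show "pres_eq S' R' u []"
      by (blast intro: pres_eq_sym pres_eq_trans)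
  next
    assume "pres_eq S' R' u []"
    then show "ev phi' u = 0" using ev_pres_eq rel' by fastforce
  qed
qed

lemma three_presentation_rename:
  assumes "three_presentation S R"
  shows "three_presentation (f ` S) (rename_syls f k ` R)"
  using assms by (fastforce simp: three_presentation_def rename_syls_def)

lemma pres_eq_subst_combination:
  assumes "t \<in> S" and "\<And>z. z \<in> set zs \<Longrightarrow> f z = t" and "(\<Sum>z\<leftarrow>zs. k z * x z) = 1"
  shows "pres_eq S R (subst_word (\<lambda>z. expand_syl (f z, k z)) (expand (map (\<lambda>z. (z, x z)) zs)))
    [(t, False)]"
proof -
  let ?w = "map (\<lambda>z. (t, k z * x z)) zs"
  have "subst_word (\<lambda>z. expand_syl (f z, k z)) (expand (map (\<lambda>z. (z, x z)) zs)) = expand ?w"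
    using assms(2) by (auto simp: subst_word_expand rename_syls_def intro!: arg_cong[where f=expand])
  moreover have "set (map fst (expand ?w)) \<subseteq> {t}"
    using set_map_fst_expand[of ?w] by auto
  moreover have "exp_sum (expand ?w) = 1"
    using assms(3) by (simp add: exp_sum_expand o_def)
  ultimately show ?thesis
    using pres_eq_power[OF assms(1)] by (fastforce simp: expand_syl_def)
qed

lemma ev_expand_combination:
  assumes "distinct zs" and "\<And>z. z \<in> set zs \<Longrightarrow> phi z = m z *s v"
    and "(\<Sum>z\<in>set zs. m z * x z) = 1"
  shows "ev phi (expand (map (\<lambda>z. (z, x z)) zs)) = v"
proof -
  have "ev phi (expand (map (\<lambda>z. (z, x z)) zs)) = (\<Sum>z\<leftarrow>zs. (m z * x z) *s v)"
    using assms(2) by (auto simp: ev_expand vector_smult_assoc mult.commute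
        intro!: arg_cong[where f=sum_list])
  also have "\<dots> = v"
    using assms(1,3) by (simp add: sum_list_distinct_conv_sum_set vec_eq_iff sum_component
        flip: sum_distrib_right)
  finally show ?thesis .
qed

text \<open>The generators z in T, with phi z = m z v, are replaced by the single generator e g0, mapped
  to v, by substituting z \<mapsto> (e g0)^(m z); conversely e g0 is recovered as the word \<Prod> z^(x z).\<close>

lemma presents_iso_merge:
  fixes S :: "'g set" and phi :: "'g \<Rightarrow> int^'n" and e :: "'g \<Rightarrow> 'h"
  assumes tp: "three_presentation S R" and iso: "presents_iso S R phi" and e: "inj_on e S"
    and T: "T \<subseteq> S" "g0 \<in> T"
    and m: "\<And>z. z \<in> T \<Longrightarrow> phi z = m z *s v"
    and x: "(\<Sum>z\<in>T. m z * x z) = 1"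
  defines "f \<equiv> \<lambda>z. if z \<in> T then e g0 else e z"
    and "k \<equiv> \<lambda>z. if z \<in> T then m z else 1"
    and "phi' \<equiv> \<lambda>h. if h = e g0 then v else phi (inv_into S e h)"
  shows "presents_iso (f ` S) (rename_syls f k ` R) phi'"
proof -
  let ?t = "e g0" and ?S' = "f ` S" and ?R' = "rename_syls f k ` R"
  have "finite T"
    using T(1) tp finite_subset by (auto simp: three_presentation_def)
  then obtain zs where zs: "set zs = T" "distinct zs"
    using finite_distinct_list by blast
  define F where "F = (\<lambda>z. expand_syl (f z, k z))"
  define G where "G h = (if h = ?t then expand (map (\<lambda>z. (z, x z)) zs)
    else [(inv_into S e h, False)])" for h
  have t: "?t \<in> ?S'" using T by (auto simp: f_def)
  have other: "f z = e z" "inv_into S e (e z) = z" "e z \<noteq> ?t" if "z \<in> S - T" for z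
    using that e T by (auto simp: f_def inj_on_def)
  have phi_factor: "k g *s phi' (f g) = phi g" if "g \<in> S" for g
    using that m other by (cases "g \<in> T") (auto simp: f_def k_def phi'_def)
  have G_t: "ev phi (G ?t) = v" "set (map fst (G ?t)) \<subseteq> S"
    "pres_eq ?S' ?R' (subst_word F (G ?t)) [(?t, False)]"
  proof -
    show "ev phi (G ?t) = v"
      unfolding G_def if_P[OF refl] by (rule ev_expand_combination) (use zs m x in auto)
    show "set (map fst (G ?t)) \<subseteq> S"
      using set_map_fst_expand[of "map (\<lambda>z. (z, x z)) zs"] zs T(1) by (auto simp: G_def)
    have "(\<Sum>z\<leftarrow>zs. k z * x z) = 1"
      using zs x by (simp add: sum_list_distinct_conv_sum_set k_def)
    then show "pres_eq ?S' ?R' (subst_word F (G ?t)) [(?t, False)]"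
      unfolding G_def F_def if_P[OF refl] using zs
      by (intro pres_eq_subst_combination[OF t]) (auto simp: f_def)
  qed
  have G_other: "ev phi (G h) = phi' h" "set (map fst (G h)) \<subseteq> S"
    "pres_eq ?S' ?R' (subst_word F (G h)) [(h, False)]"
    if h: "h \<in> ?S'" "h \<noteq> ?t" for h
  proof -
    obtain z where "z \<in> S - T" "h = e z" using h by (auto simp: f_def)
    then show "ev phi (G h) = phi' h" "set (map fst (G h)) \<subseteq> S"
      "pres_eq ?S' ?R' (subst_word F (G h)) [(h, False)]"
      using other by (auto simp: G_def phi'_def F_def k_def expand_syl_def)
  qed
  show ?thesis
  proof (rule presents_iso_transfer[OF iso])
    show "set (map fst (F g)) \<subseteq> ?S'" if "g \<in> S" for g
      using that set_map_fst_expand_syl by (fastforce simp: F_def)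
    show "pres_eq ?S' ?R' (subst_word F (expand r)) []" if "r \<in> R" for r
      using pres_eq_relator[of "rename_syls f k r" _ ?S' "[]" "[]"] that
      by (simp add: F_def subst_word_expand)
    show "ev phi (G h) = phi' h" if "h \<in> ?S'" for h
      using that G_t(1) G_other(1) by (cases "h = ?t") (auto simp: phi'_def)
    show "set (map fst (G h)) \<subseteq> S" if "h \<in> ?S'" for h
      using that G_t(2) G_other(2) by (cases "h = ?t") auto
    show "pres_eq ?S' ?R' (subst_word F (G h)) [(h, False)]" if "h \<in> ?S'" for h
      using that G_t(3) G_other(3) by (cases "h = ?t") auto
    show "ev phi' (expand r') = 0" if "r' \<in> ?R'" for r'
    proof -
      obtain r where r: "r \<in> R" "r' = rename_syls f k r" using \<open>r' \<in> ?R'\<close> by blast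
      then have "set (map fst r) \<subseteq> S" using tp by (auto simp: three_presentation_def)
      then show ?thesis
        using r phi_factor presents_iso_relator_ev[OF tp iso r(1)] by (simp add: ev_expand_rename_syls)
    qed
  qed (use phi_factor in \<open>simp add: F_def ev_expand_syl\<close>)
qed

lemma merge_generators:
  fixes S :: "'g set" and phi :: "'g \<Rightarrow> int^'n"
  assumes tp: "three_presentation S R" and iso: "presents_iso S R phi"
    and T: "T \<subseteq> S" "g0 \<in> T" "g1 \<in> T" "g0 \<noteq> g1"
    and m: "\<And>z. z \<in> T \<Longrightarrow> phi z = m z *s v"
    and x: "(\<Sum>z\<in>T. m z * x z) = 1"
  obtains S' :: "nat set" and R' and phi' :: "nat \<Rightarrow> int^'n"
  where "three_presentation S' R'" "presents_iso S' R' phi'" "card S' < card S"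
proof -
  have "finite S" using tp by (simp add: three_presentation_def)
  then obtain e :: "'g \<Rightarrow> nat" where e: "inj_on e S"
    using finite_imp_inj_to_nat_seg by blast
  define f where "f \<equiv> \<lambda>z. if z \<in> T then e g0 else e z"
  have "\<not> inj_on f S" using T by (auto simp: inj_on_def f_def)
  then have "card (f ` S) < card S"
    using \<open>finite S\<close> card_image_le[of S f] inj_on_iff_eq_card by fastforce
  then show ?thesis
    using that three_presentation_rename[OF tp] presents_iso_merge[OF tp iso e T(1,2) m x]
    unfolding f_def by blast
qed

section \<open>Integer vectors spanning a line\<close>

lemma real_vec_nth [simp]: "real_vec v $ i = real_of_int (v $ i)"
  by (simp add: real_vec_def)

lemma real_vec_eq_0_iff [simp]: "real_vec v = 0 \<longleftrightarrow> v = 0"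
  by (simp add: vec_eq_iff)

lemma real_vec_zero [simp]: "real_vec 0 = 0"
  by (simp add: vec_eq_iff)

lemma real_vec_add: "real_vec (v + w) = real_vec v + real_vec w"
  by (simp add: vec_eq_iff)

lemma real_vec_smult: "real_vec (a *s v) = of_int a *\<^sub>R real_vec v"
  by (simp add: vec_eq_iff)

lemma gen_dim_le1_cross_eq:
  assumes "gen_dim phi T \<le> 1" "z \<in> T" "w \<in> T"
  shows "phi z $ i * phi w $ j = phi z $ j * phi w $ i"
proof -
  let ?V = "(\<lambda>g. real_vec (phi g)) ` T"
  obtain B where B: "B \<subseteq> ?V" "independent B" "?V \<subseteq> span B" "card B = dim ?V"
    by (rule basis_exists)
  have "finite B" using B(2) by (rule independent_bound_general[THEN conjunct1])
  moreover have "card B \<le> Suc 0" using B(4) assms(1) by (simp add: gen_dim_def)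
  ultimately have "\<forall>a\<in>B. \<forall>b\<in>B. a = b" using card_le_Suc0_iff_eq by blast
  then obtain b where "B \<subseteq> {b}" by (cases "B = {}") blast+
  then have "real_vec (phi z) \<in> span {b}" "real_vec (phi w) \<in> span {b}"
    using B(3) assms(2,3) span_mono by blast+
  then obtain cz cw where cz: "real_vec (phi z) = cz *\<^sub>R b" and cw: "real_vec (phi w) = cw *\<^sub>R b"
    unfolding span_singleton by blast
  have "real_of_int (phi z $ k) = cz * b $ k" "real_of_int (phi w $ k) = cw * b $ k" for k
    using arg_cong[OF cz, of "\<lambda>v. v $ k"] arg_cong[OF cw, of "\<lambda>v. v $ k"] by simp_all
  then have "real_of_int (phi z $ i * phi w $ j) = real_of_int (phi z $ j * phi w $ i)"
    unfolding of_int_mult by simp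
  then show ?thesis by (simp only: of_int_eq_iff)
qed

lemma bezout_Gcd_image:
  fixes c :: "'a \<Rightarrow> int"
  assumes "finite A"
  shows "\<exists>x. (\<Sum>z\<in>A. x z * c z) = Gcd (c ` A)"
  using assms
proof (induction rule: finite_induct)
  case empty
  then show ?case by simp
next
  case (insert a A)
  obtain x where x: "(\<Sum>z\<in>A. x z * c z) = Gcd (c ` A)" using insert by blast
  obtain p q where pq: "p * c a + q * Gcd (c ` A) = gcd (c a) (Gcd (c ` A))"
    using bezout_int by blast
  define y where "y z = (if z = a then p else q * x z)" for z
  have "(\<Sum>z\<in>A. y z * c z) = (\<Sum>z\<in>A. q * (x z * c z))"
    using insert(2) by (intro sum.cong) (auto simp: y_def)
  also have "\<dots> = q * Gcd (c ` A)"
    by (simp add: sum_distrib_left[symmetric] x)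
  finally have "(\<Sum>z\<in>A. y z * c z) = q * Gcd (c ` A)" .
  then have "(\<Sum>z\<in>insert a A. y z * c z) = p * c a + q * Gcd (c ` A)"
    using insert(1,2) by (simp add: y_def)
  then show ?case using pq by (auto simp: Gcd_insert)
qed

text \<open>Vectors of Z^n spanning a line generate a cyclic group: with d the gcd of the j-th
  coordinates, v = \<Sum> x_z phi z has j-th coordinate d, and every phi z is (phi z $ j div d) v.\<close>

lemma gen_dim_le1_cyclic:
  fixes phi :: "'g \<Rightarrow> int^'n"
  assumes T: "finite T" "g0 \<in> T" and dim: "gen_dim phi T \<le> 1"
  shows "\<exists>v m x. (\<forall>z\<in>T. phi z = m z *s v) \<and> (\<Sum>z\<in>T. m z * x z) = 1"
proof (cases "\<forall>z\<in>T. phi z = 0")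
  case True
  define m :: "'g \<Rightarrow> int" where "m z = (if z = g0 then 1 else 0)" for z
  have "(\<Sum>z\<in>T. m z * m z) = 1" using T by (simp add: m_def if_distrib cong: if_cong)
  then show ?thesis using True by (intro exI[of _ 0] exI[of _ m]) auto
next
  case False
  then obtain z1 j where z1: "z1 \<in> T" "phi z1 $ j \<noteq> 0" by (auto simp: vec_eq_iff)
  define c where "c z = phi z $ j" for z
  define d where "d = Gcd (c ` T)"
  obtain x where x: "(\<Sum>z\<in>T. x z * c z) = d" using bezout_Gcd_image[OF T(1), of c] d_def by blast
  have "d \<noteq> 0" using z1 by (auto simp: d_def Gcd_0_iff c_def)
  define v :: "int^'n" where "v = (\<chi> i. \<Sum>z\<in>T. x z * phi z $ i)"
  define m where "m z = c z div d" for z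
  have dm: "d * m z = c z" if "z \<in> T" for z
    using that by (simp add: m_def d_def Gcd_dvd)
  have cross: "phi w $ i * phi z1 $ j = c w * phi z1 $ i" if "w \<in> T" for w i
    using gen_dim_le1_cross_eq[OF dim that z1(1), of i j] by (simp add: c_def)
  have "v $ i * phi z1 $ j = d * phi z1 $ i" for i
  proof -
    have "v $ i * phi z1 $ j = (\<Sum>z\<in>T. x z * (phi z $ i * phi z1 $ j))"
      by (simp add: v_def sum_distrib_right mult.assoc)
    also have "\<dots> = (\<Sum>z\<in>T. x z * c z) * phi z1 $ i"
      by (simp add: sum_distrib_right cross mult.assoc cong: sum.cong)
    finally show ?thesis by (simp add: x)
  qed
  then have "phi z $ i * phi z1 $ j = (m z *s v) $ i * phi z1 $ j" if "z \<in> T" for z i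
    using cross[OF that] dm[OF that] by (simp add: algebra_simps)
  then have "\<forall>z\<in>T. phi z = m z *s v"
    using z1(2) by (simp add: vec_eq_iff)
  moreover have "d * (\<Sum>z\<in>T. m z * x z) = (\<Sum>z\<in>T. x z * c z)"
    by (simp add: sum_distrib_left) (rule sum.cong, simp_all add: dm[symmetric] algebra_simps)
  ultimately show ?thesis
    using \<open>d \<noteq> 0\<close> x by auto
qed

section \<open>Normal forms of relations\<close>

lemma ev_free_conj:
  assumes "free_conj u v"
  shows "ev phi u = ev phi v"
proof -
  have "ev phi u' = ev phi v'" if "free_eq u' v'" for u' v'
    using that unfolding free_eq_def
    by (rule equivclp_invariant) (auto simp: free_step_def inv_letter_def)
  then show ?thesis
    using assms unfolding free_conj_def by fastforce
qed

lemma nf_of_ev: "nf_of r w \<Longrightarrow> ev phi (expand w) = ev phi (expand r)"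
  using ev_free_conj[of "expand r" "expand w" phi] by (simp add: nf_of_def)

lemma normal_form_card_gens: "normal_form w \<Longrightarrow> card (set (map fst w)) = length w"
  using distinct_card[of "map fst w"] by (simp add: normal_form_def)

lemma nf_of_gens_subset:
  fixes r w :: "'g sylword"
  assumes "nf_of r w"
  shows "set (map fst w) \<subseteq> set (map fst r)"
proof
  fix z assume "z \<in> set (map fst w)"
  then obtain s0 where s0: "s0 \<in> set w" "fst s0 = z" by auto
  have dist: "distinct (map fst w)" and "snd s0 \<noteq> 0"
    using assms s0(1) by (auto simp: nf_of_def normal_form_def)
  \<comment> \<open>psi counts the exponent of z, which free conjugacy preserves; in w it is nonzero.\<close>
  define psi :: "'g \<Rightarrow> int^1" where "psi y = (if y = z then 1 else 0)" for y
  have "ev psi (expand w) = (\<Sum>s\<in>set w. snd s *s psi (fst s))"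
    using dist by (simp add: ev_expand sum_list_distinct_conv_sum_set distinct_map)
  also have "\<dots> = (\<Sum>s\<in>set w. if s = s0 then snd s0 *s 1 else 0)"
  proof (rule sum.cong)
    fix s assume "s \<in> set w"
    then have "fst s = z \<longleftrightarrow> s = s0"
      using dist s0 by (auto simp: distinct_map dest: inj_onD)
    then show "snd s *s psi (fst s) = (if s = s0 then snd s0 *s 1 else 0)"
      by (auto simp: psi_def)
  qed simp
  also have "\<dots> = snd s0 *s 1"
    using s0(1) by simp
  finally have "ev psi (expand w) \<noteq> 0"
    using \<open>snd s0 \<noteq> 0\<close> by (simp add: vec_eq_iff)
  then have "ev psi (expand r) \<noteq> 0"
    using nf_of_ev[OF assms, of psi] by simp
  moreover have "ev psi (expand r) = (\<Sum>s\<leftarrow>r. 0)" if "z \<notin> set (map fst r)"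
    unfolding ev_expand using that
    by (intro arg_cong[where f=sum_list] map_cong) (auto simp: psi_def)
  ultimately show "z \<in> set (map fst r)" by auto
qed

lemma nf_of_length_le:
  assumes "nf_of r w"
  shows "length w \<le> length r"
proof -
  have "length w = card (set (map fst w))"
    using assms normal_form_card_gens[of w] by (simp add: nf_of_def)
  also have "\<dots> \<le> card (set (map fst r))"
    using nf_of_gens_subset[OF assms] by (intro card_mono) auto
  also have "\<dots> \<le> length r"
    using card_length[of "map fst r"] by simp
  finally show ?thesis .
qed

lemma real_vec_ev_expand_in_span:
  "real_vec (ev phi (expand w)) \<in> span ((\<lambda>g. real_vec (phi g)) ` set (map fst w))"
proof (induction w)
  case Nil
  then show ?case by (simp add: span_zero real_vec_def zero_vec_def)
next
  case (Cons s w)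
  let ?V = "(\<lambda>g. real_vec (phi g)) ` set (map fst (s # w))"
  have "real_vec (ev phi (expand (s # w))) =
      of_int (snd s) *\<^sub>R real_vec (phi (fst s)) + real_vec (ev phi (expand w))"
    by (cases s) (simp add: ev_expand_syl real_vec_add real_vec_smult)
  moreover have "real_vec (phi (fst s)) \<in> span ?V"
    by (intro span_base) simp
  moreover have "real_vec (ev phi (expand w)) \<in> span ?V"
    using Cons.IH span_mono[of "(\<lambda>g. real_vec (phi g)) ` set (map fst w)" ?V] by auto
  ultimately show ?case
    by (simp add: span_add span_scale)
qed

lemma gen_dim_relation_less:
  assumes "normal_form w" "w \<noteq> []" "ev phi (expand w) = 0"
  shows "gen_dim phi (set (map fst w)) < length w"
proof -
  obtain w' g a where w: "w = w' @ [(g, a)]"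
    using assms(2) by (metis prod.exhaust rev_exhaust)
  have "a \<noteq> 0" using assms(1) w by (simp add: normal_form_def)
  let ?V = "(\<lambda>g. real_vec (phi g)) ` set (map fst w')"
  have eq: "real_vec (phi g) = (- 1 / of_int a) *\<^sub>R real_vec (ev phi (expand w'))"
    using assms(3) \<open>a \<noteq> 0\<close> w
    by (simp add: ev_expand_syl vec_eq_iff field_simps add_eq_0_iff2 flip: of_int_mult)
  have "real_vec (phi g) \<in> span ?V"
    unfolding eq by (rule span_scale[OF real_vec_ev_expand_in_span])
  then have "(\<lambda>g. real_vec (phi g)) ` set (map fst w) \<subseteq> span ?V"
    using w by (auto intro: span_base)
  then have "gen_dim phi (set (map fst w)) \<le> card ?V"
    unfolding gen_dim_def by (rule dim_le_card) simp
  also have "\<dots> \<le> card (set (map fst w'))"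
    by (rule card_image_le) simp
  also have "\<dots> \<le> length w'"
    by (metis card_length length_map)
  finally show ?thesis using w by simp
qed

section \<open>Minimal 3-presentations\<close>

lemma presents_iso_gen_nonzero:
  fixes phi :: "'g \<Rightarrow> int^'n"
  assumes "presents_iso S R phi"
  obtains g where "g \<in> S" "phi g \<noteq> 0"
proof -
  obtain u where u: "set (map fst u) \<subseteq> S" "ev phi u = 1"
    using assms unfolding presents_iso_def by blast
  have "(1 :: int^'n) \<noteq> 0" by (simp add: vec_eq_iff)
  then have "ev phi u \<noteq> ev (\<lambda>_. 0) u" using u(2) by simp
  then obtain x where "x \<in> set u" "phi (fst x) \<noteq> 0"
    using ev_cong[of u phi "\<lambda>_. 0"] by auto
  then show ?thesis using that u(1) by auto
qed

context
  fixes S :: "'g set" and R :: "'g sylword set" and phi :: "'g \<Rightarrow> int^'n"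
  assumes tp: "three_presentation S R" and iso: "presents_iso S R phi"
    and minimal: "\<forall>(S' :: nat set) R' (phi' :: nat \<Rightarrow> int^'n).
      three_presentation S' R' \<and> presents_iso S' R' phi' \<longrightarrow> card S \<le> card S'"
begin

lemma minimal_gen_dim_pair:
  assumes "g \<in> S" "h \<in> S" "g \<noteq> h"
  shows "2 \<le> gen_dim phi {g, h}"
proof (rule ccontr)
  assume "\<not> 2 \<le> gen_dim phi {g, h}"
  then obtain v m x where cyclic: "\<forall>z\<in>{g, h}. phi z = m z *s v" "(\<Sum>z\<in>{g, h}. m z * x z) = 1"
    using gen_dim_le1_cyclic[of "{g, h}" g phi] by auto
  have T: "{g, h} \<subseteq> S" "g \<in> {g, h}" "h \<in> {g, h}" "g \<noteq> h"
    using assms by auto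
  obtain S' :: "nat set" and R' and phi' :: "nat \<Rightarrow> int^'n"
    where smaller: "three_presentation S' R'" "presents_iso S' R' phi'" "card S' < card S"
    by (rule merge_generators[OF tp iso T, of m v x]) (use cyclic in auto)
  have "card S \<le> card S'"
    using minimal[rule_format, of S' R' phi'] smaller(1,2) by blast
  with smaller(3) show False by simp
qed

lemma minimal_gen_nonzero:
  assumes "g \<in> S"
  shows "phi g \<noteq> 0"
proof
  assume "phi g = 0"
  obtain h where h: "h \<in> S" "phi h \<noteq> 0"
    using presents_iso_gen_nonzero[OF iso] by blast
  have "(\<lambda>g. real_vec (phi g)) ` {g, h} \<subseteq> span {real_vec (phi h)}"
    using \<open>phi g = 0\<close> by (auto simp: span_zero span_base)
  then have "gen_dim phi {g, h} \<le> 1"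
    unfolding gen_dim_def using dim_le_card[of _ "{real_vec (phi h)}"] by simp
  moreover have "g \<noteq> h" using \<open>phi g = 0\<close> h(2) by auto
  ultimately show False using minimal_gen_dim_pair[OF assms h(1)] by simp
qed

lemma minimal_gen_dim_ge:
  assumes "T \<subseteq> S" "finite T"
  shows "min (card T) 2 \<le> gen_dim phi T"
proof (cases "card T \<le> 1")
  case True
  show ?thesis
  proof (cases "T = {}")
    case False
    with True assms(2) have "card T = 1" by (simp add: le_Suc_eq card_0_eq)
    then obtain g where "T = {g}" by (rule card_1_singletonE)
    then show ?thesis
      using minimal_gen_nonzero assms(1) by (simp add: gen_dim_def)
  qed simp
next
  case False
  then obtain g h where "g \<in> T" "h \<in> T" "g \<noteq> h"
    using card_le_Suc0_iff_eq[OF assms(2)] by auto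
  then have "gen_dim phi {g, h} \<le> gen_dim phi T"
    unfolding gen_dim_def by (intro dim_subset) auto
  then show ?thesis
    using minimal_gen_dim_pair \<open>g \<in> T\<close> \<open>h \<in> T\<close> \<open>g \<noteq> h\<close> assms(1) by fastforce
qed

end

theorem mainTheorem11:
  fixes S :: "'g set" and R :: "'g sylword set" and phi :: "'g \<Rightarrow> int^'n"
  assumes "three_presentation S R"
    and "presents_iso S R phi"
    and "\<forall>(S' :: nat set) R' (phi' :: nat \<Rightarrow> int^'n).
           three_presentation S' R' \<and> presents_iso S' R' phi' \<longrightarrow> card S \<le> card S'"
  shows "\<forall>r\<in>R. \<forall>w. nf_of r w \<and> w \<noteq> [] \<longrightarrow>
           length w = 3 \<and> set (map fst w) \<subseteq> S \<and> gen_dim phi (set (map fst w)) = 2"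
proof (intro ballI allI impI, elim conjE)
  fix r w
  assume r: "r \<in> R" and w: "nf_of r w" "w \<noteq> []"
  let ?W = "set (map fst w)"
  have W: "?W \<subseteq> S" and "length w \<le> 3"
    using nf_of_gens_subset[OF w(1)] nf_of_length_le[OF w(1)] assms(1) r
    by (auto simp: three_presentation_def)
  have "min (length w) 2 \<le> gen_dim phi ?W"
    using minimal_gen_dim_ge[OF assms W] w(1) normal_form_card_gens[of w] by (simp add: nf_of_def)
  moreover have "ev phi (expand w) = 0"
    using nf_of_ev[OF w(1), of phi] presents_iso_relator_ev[OF assms(1,2) r] by simp
  then have "gen_dim phi ?W < length w"
    using gen_dim_relation_less w by (auto simp: nf_of_def)
  ultimately show "length w = 3 \<and> ?W \<subseteq> S \<and> gen_dim phi ?W = 2"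
    using W \<open>length w \<le> 3\<close> by (simp add: min_def split: if_splits)
qed

end
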